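(* Let $\Omega$ be a convex domain in $\mathbb{R}^n$, let $\tau$ be a smooth symmetric $(0,2)$-tensor field on $\Omega$, and let $x_0\neq y_0$ be points of $\Omega$. Let $e_1,\dots,e_n$ be an orthonormal frame of $\mathbb{R}^n$ with $e_n=N(x_0,y_0)$, and let $E_i=(e_i,e_i)\in\mathbb{R}^n\times\mathbb{R}^n$ for $i=1,\dots,n$. Then $$\nabla_{E_i}\nabla_{E_i}E_{\tau}(x_0,y_0)=E_{\nabla_{e_i}\nabla_{e_i}\tau}(x_0,y_0)$$ for $i=1,2,\dots,n$.
   Context: For $x,y\in\mathbb{R}^n$ let $r(x,y)=\|x-y\|$, and for $x\neq y$ let $N(x,y)=\frac{y-x}{\|y-x\|}$ and $\theta(s,x,y)=x+sN(x,y)$. For a symmetric $(0,2)$-tensor field $\tau$ on $\Omega$, $E_\tau(x,y)=\int_0^{r(x,y)}\tau(\theta(s,x,y))(N(x,y),N(x,y))\,ds$, viewed as a function of $(x,y)\in\Omega\times\Omega$; $\nabla_{V}$ for $V\in\mathbb{R}^n\times\mathbb{R}^n$ denotes the directional derivative of a function of $(x,y)$ in direction $V$ (so $\nabla_V\nabla_V$ is the second directional derivative). $\nabla_{e_i}\nabla_{e_i}\tau$ is the second (Euclidean) covariant derivative of $\tau$ in direction $e_i$, a symmetric $(0,2)$-tensor field. *)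

theory Defs
  imports "HOL-Analysis.Analysis"
begin

fun Ck_on :: "nat \<Rightarrow> ('a::euclidean_space \<Rightarrow> real) \<Rightarrow> 'a set \<Rightarrow> bool" where
  "Ck_on 0 f S = continuous_on S f"
| "Ck_on (Suc k) f S = (f differentiable_on S \<and>
      (\<forall>v. Ck_on k (\<lambda>x. frechet_derivative f (at x) v) S))"

definition smooth_fun_on :: "('a::euclidean_space \<Rightarrow> real) \<Rightarrow> 'a set \<Rightarrow> bool" where
  "smooth_fun_on f S = (\<forall>k. Ck_on k f S)"

text \<open>A smooth symmetric (0,2)-tensor field on S: tau x u v is the value of the tensor at x on (u,v).\<close>
definition smooth_sym_tensor_field :: "('a::euclidean_space \<Rightarrow> 'a \<Rightarrow> 'a \<Rightarrow> real) \<Rightarrow> 'a set \<Rightarrow> bool" where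
  "smooth_sym_tensor_field \<tau> S =
     ((\<forall>x\<in>S. bilinear (\<tau> x) \<and> (\<forall>u v. \<tau> x u v = \<tau> x v u)) \<and>
      (\<forall>u v. smooth_fun_on (\<lambda>x. \<tau> x u v) S))"

definition Nvec :: "'a::euclidean_space \<Rightarrow> 'a \<Rightarrow> 'a" where
  "Nvec x y = (y - x) /\<^sub>R norm (y - x)"

definition theta :: "real \<Rightarrow> 'a::euclidean_space \<Rightarrow> 'a \<Rightarrow> 'a" where
  "theta s x y = x + s *\<^sub>R Nvec x y"

definition Etau :: "('a::euclidean_space \<Rightarrow> 'a \<Rightarrow> 'a \<Rightarrow> real) \<Rightarrow> 'a \<Rightarrow> 'a \<Rightarrow> real" where
  "Etau \<tau> x y = integral {0..dist x y} (\<lambda>s. \<tau> (theta s x y) (Nvec x y) (Nvec x y))"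

text \<open>Second directional derivative nabla_V nabla_V of F :: 'b => real at p:
  nabla_V F q = d/ds F(q + sV) at s=0, hence nabla_V(nabla_V F)(p) = g''(0), g t = F(p + tV).\<close>
definition dir_deriv :: "('b::real_normed_vector \<Rightarrow> real) \<Rightarrow> 'b \<Rightarrow> 'b \<Rightarrow> real" where
  "dir_deriv F V p = deriv (\<lambda>s. F (p + s *\<^sub>R V)) 0"

text \<open>Euclidean second covariant derivative nabla_e nabla_e tau of a (0,2)-tensor field:
  componentwise (constant frame) second directional derivative.\<close>
definition cov2 :: "'a::euclidean_space \<Rightarrow> ('a \<Rightarrow> 'a \<Rightarrow> 'a \<Rightarrow> real) \<Rightarrow> 'a \<Rightarrow> 'a \<Rightarrow> 'a \<Rightarrow> real" where
  "cov2 e \<tau> z u v = dir_deriv (dir_deriv (\<lambda>w. \<tau> w u v) e) e z"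

end

theory Submission
  imports Defs
begin

text \<open>Moving both endpoints by the same vector \<open>t e\<close> translates the segment rigidly and
  leaves \<open>N\<close> and \<open>r\<close> unchanged, so \<open>E\<^sub>\<tau>\<close> along \<open>(e, e)\<close> is \<open>t \<mapsto> \<integral>\<^sub>0\<^sup>r f (\<theta>(s) + t e) ds\<close>
  with \<open>f = \<tau>(\<cdot>)(N, N)\<close>. Differentiating twice under the integral sign gives the
  integral of the second derivative of \<open>f\<close> in direction \<open>e\<close>, which is
  \<open>(\<nabla>\<^sub>e\<nabla>\<^sub>e\<tau>)(N, N)\<close> since the frame is constant.\<close>

lemma Ck_on_imp_continuous_on: "Ck_on k f S \<Longrightarrow> continuous_on S f"
  by (cases k) (auto intro: differentiable_imp_continuous_on)

lemma Ck_on_Suc_imp_differentiable_at: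
  "open S \<Longrightarrow> Ck_on (Suc k) f S \<Longrightarrow> x \<in> S \<Longrightarrow> f differentiable at x"
  using differentiable_on_eq_differentiable_at by auto

lemma Ck_on_2_imp_Ck_on_Suc_Suc: "Ck_on 2 f S \<Longrightarrow> Ck_on (Suc (Suc 0)) f S"
  by (simp add: numeral_2_eq_2 del: Ck_on.simps)

lemma Ck_on_2_differentiable:
  assumes "open S" "Ck_on 2 f S"
  shows "\<forall>x\<in>S. f differentiable at x" "continuous_on S f"
  using Ck_on_Suc_imp_differentiable_at[OF assms(1) Ck_on_2_imp_Ck_on_Suc_Suc[OF assms(2)]]
    Ck_on_imp_continuous_on[OF assms(2)] by auto

lemma Ck_on_2_directional_derivative:
  assumes "open S" "Ck_on 2 f S"
  shows "\<forall>x\<in>S. (\<lambda>x. frechet_derivative f (at x) v) differentiable at x"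
    and "continuous_on S (\<lambda>x. frechet_derivative f (at x) v)"
    and "continuous_on S (\<lambda>x. frechet_derivative (\<lambda>x. frechet_derivative f (at x) v) (at x) v)"
proof -
  have C1: "Ck_on (Suc 0) (\<lambda>x. frechet_derivative f (at x) v) S"
    using Ck_on_2_imp_Ck_on_Suc_Suc[OF assms(2)] by simp
  then show "\<forall>x\<in>S. (\<lambda>x. frechet_derivative f (at x) v) differentiable at x"
    "continuous_on S (\<lambda>x. frechet_derivative f (at x) v)"
    using Ck_on_Suc_imp_differentiable_at[OF assms(1) C1] Ck_on_imp_continuous_on[OF C1] by auto
  show "continuous_on S (\<lambda>x. frechet_derivative (\<lambda>x. frechet_derivative f (at x) v) (at x) v)"
    using C1 by simp
qed

lemma has_real_derivative_along_line:
  fixes f :: "'a::real_normed_vector \<Rightarrow> real"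
  assumes "f differentiable (at (w + t *\<^sub>R v))"
  shows "((\<lambda>s. f (w + s *\<^sub>R v)) has_real_derivative frechet_derivative f (at (w + t *\<^sub>R v)) v) (at t)"
proof -
  let ?f' = "frechet_derivative f (at (w + t *\<^sub>R v))"
  have "((\<lambda>s. w + s *\<^sub>R v) has_derivative (\<lambda>s. s *\<^sub>R v)) (at t)"
    by (auto intro!: derivative_eq_intros)
  moreover have "(f has_derivative ?f') (at (w + t *\<^sub>R v))"
    using assms frechet_derivative_works by blast
  ultimately have "((\<lambda>s. f (w + s *\<^sub>R v)) has_derivative (\<lambda>s. ?f' (s *\<^sub>R v))) (at t)"
    using diff_chain_at by (fastforce simp: o_def)
  moreover have "(\<lambda>s. ?f' (s *\<^sub>R v)) = (*) (?f' v)"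
    using linear_scale[OF linear_frechet_derivative[OF assms]] by (auto simp: mult.commute)
  ultimately show ?thesis
    unfolding has_field_derivative_def by simp
qed

lemma dir_deriv_twice_eqI:
  fixes F :: "'b::real_normed_vector \<Rightarrow> real"
  assumes "open U" "0 \<in> U"
    and F': "\<And>t. t \<in> U \<Longrightarrow> ((\<lambda>t. F (p + t *\<^sub>R V)) has_real_derivative F1 t) (at t)"
    and F'': "(F1 has_real_derivative c) (at 0)"
  shows "dir_deriv (dir_deriv F V) V p = c"
proof -
  have "dir_deriv F V (p + t *\<^sub>R V) = F1 t" if "t \<in> U" for t
  proof -
    have "((\<lambda>s. F (p + (s + t) *\<^sub>R V)) has_real_derivative F1 t) (at 0)"
      using DERIV_shift[of "\<lambda>t. F (p + t *\<^sub>R V)" "F1 t" 0 t] F'[OF that] by simp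
    moreover have "(\<lambda>s. F (p + t *\<^sub>R V + s *\<^sub>R V)) = (\<lambda>s. F (p + (s + t) *\<^sub>R V))"
      by (simp add: scaleR_add_left algebra_simps)
    ultimately show ?thesis
      unfolding dir_deriv_def by (simp add: DERIV_imp_deriv)
  qed
  then have "((\<lambda>t. dir_deriv F V (p + t *\<^sub>R V)) has_real_derivative c) (at 0)"
    using has_field_derivative_transform_within_open[OF F'' assms(1,2)] by simp
  then show ?thesis
    unfolding dir_deriv_def[of "dir_deriv F V"] by (simp add: DERIV_imp_deriv)
qed

lemma dir_deriv_twice_eq_frechet_derivative:
  fixes f :: "'a::euclidean_space \<Rightarrow> real"
  assumes "open S" "Ck_on 2 f S" "p \<in> S"
  shows "dir_deriv (dir_deriv f v) v p
       = frechet_derivative (\<lambda>x. frechet_derivative f (at x) v) (at p) v"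
proof (rule dir_deriv_twice_eqI)
  show "open ((\<lambda>t. p + t *\<^sub>R v) -` S)"
    by (rule open_vimage[OF assms(1)]) (intro continuous_intros)
  show "0 \<in> (\<lambda>t. p + t *\<^sub>R v) -` S"
    using assms(3) by simp
  show "((\<lambda>t. f (p + t *\<^sub>R v)) has_real_derivative frechet_derivative f (at (p + t *\<^sub>R v)) v) (at t)"
    if "t \<in> (\<lambda>t. p + t *\<^sub>R v) -` S" for t
    using that Ck_on_2_differentiable(1)[OF assms(1,2)]
    by (intro has_real_derivative_along_line) simp
  show "((\<lambda>t. frechet_derivative f (at (p + t *\<^sub>R v)) v) has_real_derivative
          frechet_derivative (\<lambda>x. frechet_derivative f (at x) v) (at p) v) (at 0)"
    using has_real_derivative_along_line[of "\<lambda>x. frechet_derivative f (at x) v" p 0 v] assms(3)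
      Ck_on_2_directional_derivative(1)[OF assms(1,2)] by simp
qed

lemma compact_translates_in_open:
  fixes K S :: "'a::real_normed_vector set"
  assumes "compact K" "open S" "K \<subseteq> S"
  obtains \<delta> where "\<delta> > 0" "\<And>k t. k \<in> K \<Longrightarrow> \<bar>t\<bar> < \<delta> \<Longrightarrow> k + t *\<^sub>R v \<in> S"
proof -
  obtain \<epsilon> where "\<epsilon> > 0" and \<epsilon>: "(\<Union>k\<in>K. ball k \<epsilon>) \<subseteq> S"
    using compact_subset_open_imp_ball_epsilon_subset[OF assms] .
  have "k + t *\<^sub>R v \<in> S" if "k \<in> K" "\<bar>t\<bar> < \<epsilon> / (norm v + 1)" for k t
  proof -
    have "\<bar>t\<bar> * norm v \<le> \<bar>t\<bar> * (norm v + 1)"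
      by (simp add: mult_left_mono)
    also have "\<dots> < \<epsilon>"
      using that(2) by (simp add: field_simps add_pos_nonneg)
    finally have "k + t *\<^sub>R v \<in> ball k \<epsilon>"
      by (simp add: dist_norm)
    then show ?thesis
      using \<epsilon> that(1) by blast
  qed
  with \<open>\<epsilon> > 0\<close> show ?thesis
    by (intro that[of "\<epsilon> / (norm v + 1)"]) (auto intro!: divide_pos_pos add_nonneg_pos)
qed

lemma has_real_derivative_integral_translate:
  fixes f :: "'a::euclidean_space \<Rightarrow> real" and a b :: real
  assumes "open U" "convex U" "t \<in> U"
    and \<gamma>: "continuous_on {a..b} \<gamma>"
    and in_S: "\<And>s t. s \<in> {a..b} \<Longrightarrow> t \<in> U \<Longrightarrow> \<gamma> s + t *\<^sub>R v \<in> S"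
    and f: "\<forall>x\<in>S. f differentiable at x" "continuous_on S f"
    and f': "continuous_on S (\<lambda>x. frechet_derivative f (at x) v)"
  shows "((\<lambda>t. integral {a..b} (\<lambda>s. f (\<gamma> s + t *\<^sub>R v))) has_real_derivative
           integral {a..b} (\<lambda>s. frechet_derivative f (at (\<gamma> s + t *\<^sub>R v)) v)) (at t)"
proof -
  have cbox: "cbox a b = {a..b}"
    by simp
  have \<gamma>_snd: "continuous_on (U \<times> {a..b}) (\<lambda>p. \<gamma> (snd p))"
    by (rule continuous_on_compose2[OF \<gamma> continuous_on_snd]) auto
  have line: "continuous_on (U \<times> {a..b}) (\<lambda>(t, s). \<gamma> s + t *\<^sub>R v)"
    unfolding split_beta
    by (rule continuous_on_add[OF \<gamma>_snd continuous_on_scaleR[OF continuous_on_fst[OF continuous_on_id] continuous_on_const]])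
  have "((\<lambda>t. integral (cbox a b) (\<lambda>s. f (\<gamma> s + t *\<^sub>R v))) has_real_derivative
           integral (cbox a b) (\<lambda>s. frechet_derivative f (at (\<gamma> s + t *\<^sub>R v)) v)) (at t within U)"
  proof (rule leibniz_rule_field_derivative)
    fix t s assume "t \<in> U" "s \<in> cbox a b"
    then have "f differentiable at (\<gamma> s + t *\<^sub>R v)"
      using f(1) in_S by (simp add: cbox)
    then show "((\<lambda>t. f (\<gamma> s + t *\<^sub>R v)) has_real_derivative
                 frechet_derivative f (at (\<gamma> s + t *\<^sub>R v)) v) (at t within U)"
      by (rule has_field_derivative_at_within[OF has_real_derivative_along_line])
  next
    fix t assume "t \<in> U"
    have "continuous_on {a..b} (\<lambda>s. \<gamma> s + t *\<^sub>R v)"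
      by (rule continuous_on_add[OF \<gamma> continuous_on_const])
    then have "continuous_on {a..b} (\<lambda>s. f (\<gamma> s + t *\<^sub>R v))"
      by (rule continuous_on_compose2[OF f(2)]) (use in_S \<open>t \<in> U\<close> in auto)
    then show "(\<lambda>s. f (\<gamma> s + t *\<^sub>R v)) integrable_on cbox a b"
      unfolding cbox by (rule integrable_continuous_real)
  next
    have "(\<lambda>(t, s). \<gamma> s + t *\<^sub>R v) ` (U \<times> {a..b}) \<subseteq> S"
      using in_S by auto
    from continuous_on_compose2[OF f' line this]
    show "continuous_on (U \<times> cbox a b) (\<lambda>(t, s). frechet_derivative f (at (\<gamma> s + t *\<^sub>R v)) v)"
      unfolding cbox by (simp add: split_beta)
  qed (use assms in auto)
  then show ?thesis
    using at_within_open[OF assms(3,1)] by (simp add: cbox)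
qed

lemma dir_deriv_twice_integral_translate:
  fixes f :: "'a::euclidean_space \<Rightarrow> real" and F :: "'b::real_normed_vector \<Rightarrow> real"
    and a b :: real
  assumes "open S" "Ck_on 2 f S" and \<gamma>: "continuous_on {a..b} \<gamma>" "\<gamma> ` {a..b} \<subseteq> S"
    and F: "\<And>t. F (p + t *\<^sub>R V) = integral {a..b} (\<lambda>s. f (\<gamma> s + t *\<^sub>R v))"
  shows "dir_deriv (dir_deriv F V) V p
       = integral {a..b} (\<lambda>s. frechet_derivative (\<lambda>x. frechet_derivative f (at x) v) (at (\<gamma> s)) v)"
proof -
  define f1 where "f1 = (\<lambda>x. frechet_derivative f (at x) v)"
  define f2 where "f2 = (\<lambda>x. frechet_derivative f1 (at x) v)"
  note f = Ck_on_2_differentiable[OF assms(1,2)]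
  note f1 = Ck_on_2_directional_derivative[OF assms(1,2), of v, folded f1_def, folded f2_def]
  obtain \<delta> where "\<delta> > 0" and \<delta>: "\<And>k t. k \<in> \<gamma> ` {a..b} \<Longrightarrow> \<bar>t\<bar> < \<delta> \<Longrightarrow> k + t *\<^sub>R v \<in> S"
    using compact_translates_in_open[OF compact_continuous_image[OF \<gamma>(1) compact_Icc] assms(1) \<gamma>(2), where v=v]
    by blast
  have tube: "\<gamma> s + t *\<^sub>R v \<in> S" if "s \<in> {a..b}" "t \<in> ball 0 \<delta>" for s t
    using that by (intro \<delta>) auto
  have F': "((\<lambda>t. F (p + t *\<^sub>R V)) has_real_derivative
             integral {a..b} (\<lambda>s. f1 (\<gamma> s + t *\<^sub>R v))) (at t)" if "t \<in> ball 0 \<delta>" for t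
    using has_real_derivative_integral_translate[of "ball 0 \<delta>" t a b \<gamma> v S f]
      that \<gamma>(1) tube f f1(2) by (simp add: F f1_def)
  have F'': "((\<lambda>t. integral {a..b} (\<lambda>s. f1 (\<gamma> s + t *\<^sub>R v))) has_real_derivative
             integral {a..b} (\<lambda>s. f2 (\<gamma> s))) (at 0)"
    using has_real_derivative_integral_translate[of "ball 0 \<delta>" 0 a b \<gamma> v S f1]
      \<open>\<delta> > 0\<close> \<gamma>(1) tube f1 by (simp add: f2_def)
  show ?thesis
    using dir_deriv_twice_eqI[OF open_ball[of 0 \<delta>] _ F' F''] \<open>\<delta> > 0\<close> by (simp add: f1_def f2_def)
qed

lemma theta_in_closed_segment:
  assumes "s \<in> {0..dist x y}"
  shows "theta s x y \<in> closed_segment x y"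
proof (cases "x = y")
  case False
  then have "theta s x y = (1 - s / dist x y) *\<^sub>R x + (s / dist x y) *\<^sub>R y"
    unfolding theta_def Nvec_def
    by (simp add: dist_norm norm_minus_commute algebra_simps divide_inverse)
  then show ?thesis
    unfolding in_segment using assms False by (intro exI[of _ "s / dist x y"]) auto
qed (use assms in \<open>simp add: theta_def\<close>)

lemma Etau_translate:
  "Etau \<tau> (x + w) (y + w)
   = integral {0..dist x y} (\<lambda>s. \<tau> (theta s x y + w) (Nvec x y) (Nvec x y))"
proof -
  have "Nvec (x + w) (y + w) = Nvec x y" "dist (x + w) (y + w) = dist x y"
    by (simp_all add: Nvec_def dist_norm)
  moreover have "theta s (x + w) (y + w) = theta s x y + w" for s
    by (simp add: theta_def Nvec_def algebra_simps)
  ultimately show ?thesis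
    by (simp add: Etau_def)
qed

theorem theorem2p4:
  fixes \<Omega> :: "'a::euclidean_space set"
    and \<tau> :: "'a \<Rightarrow> 'a \<Rightarrow> 'a \<Rightarrow> real"
    and x0 y0 :: 'a
    and e :: "nat \<Rightarrow> 'a"
  assumes "open \<Omega>" and "convex \<Omega>" and "\<Omega> \<noteq> {}"
    and "smooth_sym_tensor_field \<tau> \<Omega>"
    and "x0 \<in> \<Omega>" and "y0 \<in> \<Omega>" and "x0 \<noteq> y0"
    and "\<forall>i\<in>{1..DIM('a)}. \<forall>j\<in>{1..DIM('a)}. e i \<bullet> e j = (if i = j then 1 else 0)"
    and "e (DIM('a)) = Nvec x0 y0"
    and "i \<in> {1..DIM('a)}"
  shows "dir_deriv (dir_deriv (\<lambda>(x, y). Etau \<tau> x y) (e i, e i)) (e i, e i) (x0, y0)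
         = Etau (cov2 (e i) \<tau>) x0 y0"
proof -
  define N r where "N = Nvec x0 y0" and "r = dist x0 y0"
  define f where "f = (\<lambda>x. \<tau> x N N)"
  have C2: "Ck_on 2 f \<Omega>"
    using assms(4) unfolding smooth_sym_tensor_field_def smooth_fun_on_def f_def by blast
  have \<theta>: "continuous_on {0..r} (\<lambda>s. theta s x0 y0)"
    unfolding theta_def by (intro continuous_intros)
  have seg: "theta s x0 y0 \<in> \<Omega>" if "s \<in> {0..r}" for s
    using theta_in_closed_segment[of s] closed_segment_subset[OF assms(5,6,2)] that r_def by blast
  have "dir_deriv (dir_deriv (\<lambda>(x, y). Etau \<tau> x y) (e i, e i)) (e i, e i) (x0, y0)
        = integral {0..r} (\<lambda>s. frechet_derivative (\<lambda>x. frechet_derivative f (at x) (e i)) (at (theta s x0 y0)) (e i))"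
    using seg by (intro dir_deriv_twice_integral_translate[OF assms(1) C2 \<theta>])
      (auto simp: Etau_translate f_def N_def r_def)
  also have "\<dots> = Etau (cov2 (e i) \<tau>) x0 y0"
    unfolding Etau_def r_def[symmetric] N_def[symmetric] cov2_def f_def[symmetric]
    using dir_deriv_twice_eq_frechet_derivative[OF assms(1) C2 seg] by (intro integral_cong) simp
  finally show ?thesis .
qed

end
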